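(* Let $G=(V,E,\omega)\in\mathcal{G}$ and $\gamma\geq 0$. Let $\{\tau_k\}_{k\in\mathbb{N}}$ be a sequence of positive real numbers with $\tau_k\to0$ as $k\to\infty$, and let $\{u_k\}_{k\in\mathbb{N}}\subset\mathcal K$ be a sequence for which there is $C>0$ such that $\tilde J_{\tau_k}(u_k)\leq C$ for all $k\in\mathbb{N}$. Then there exist a subsequence $\{u_{k_l}\}_{l\in\mathbb{N}}$ and $u\in\mathcal V^b$ such that $u_{k_l}\to u$ as $l\to\infty$.
   Context: $\mathcal{G}$ is the set of finite, simple, connected, undirected, edge-weighted graphs $G=(V,E,\omega)$ with $V=\{1,\dots,n\}$, $n\geq 2$, weights $\omega_{ij}=\omega_{ji}>0$ for $(i,j)\in E$ and $\omega_{ij}=0$ otherwise. Degrees $d_i=\sum_j\omega_{ij}$. $\mathcal V$: functions $u:V\to\mathbb R$. Fixed $r\in[0,1]$; $\langle u,v\rangle_{\mathcal V}=\sum_i d_i^r u_iv_i$. $(\Delta u)_i=d_i^{-r}\sum_j\omega_{ij}(u_i-u_j)$. $\chi_S$ indicator of $S$. $\mathcal M(u)=\sum_i d_i^ru_i$, $\mathcal A(u)=\frac{\mathcal M(u)}{\sum_i d_i^r}\chi_V$. For $u\in\mathcal V$ let $\varphi$ be the unique solution of $\Delta\varphi=u-\mathcal A(u)$, $\mathcal M(\varphi)=0$, and $Lu:=\Delta u+\gamma\varphi$; $e^{-\tau L}$ its exponential. $\mathcal V^b$: $\{0,1\}$-valued functions; $\mathcal K$: $[0,1]$-valued functions. For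 $\tau>0$, $\tilde J_\tau(u)=\frac1\tau\langle\chi_V-u,e^{-\tau L}u\rangle_{\mathcal V}$ for $u\in\mathcal K$. Convergence in $\mathcal V$ is in the norm induced by $\langle\cdot,\cdot\rangle_{\mathcal V}$. *)

theory Defs
  imports "HOL-Analysis.Analysis"
begin

text \<open>Vertex functions are modelled as nat => real; only values on V matter.\<close>

definition Vset :: "nat \<Rightarrow> nat set" where
  "Vset n = {1..n}"

definition edge_rel :: "nat \<Rightarrow> (nat \<Rightarrow> nat \<Rightarrow> real) \<Rightarrow> (nat \<times> nat) set" where
  "edge_rel n w = {(i,j). i \<in> Vset n \<and> j \<in> Vset n \<and> w i j > 0}"

definition graph_G :: "nat \<Rightarrow> (nat \<Rightarrow> nat \<Rightarrow> real) \<Rightarrow> bool" where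
  "graph_G n w \<longleftrightarrow> n \<ge> 2
     \<and> (\<forall>i j. w i j = w j i)
     \<and> (\<forall>i j. w i j \<ge> 0)
     \<and> (\<forall>i. w i i = 0)
     \<and> (\<forall>i j. (i \<notin> Vset n \<or> j \<notin> Vset n) \<longrightarrow> w i j = 0)
     \<and> (\<forall>i\<in>Vset n. \<forall>j\<in>Vset n. (i, j) \<in> (edge_rel n w)\<^sup>*)"

definition deg :: "nat \<Rightarrow> (nat \<Rightarrow> nat \<Rightarrow> real) \<Rightarrow> nat \<Rightarrow> real" where
  "deg n w i = (\<Sum>j\<in>Vset n. w i j)"

definition inner_V :: "nat \<Rightarrow> (nat \<Rightarrow> nat \<Rightarrow> real) \<Rightarrow> real \<Rightarrow> (nat \<Rightarrow> real) \<Rightarrow> (nat \<Rightarrow> real) \<Rightarrow> real" where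
  "inner_V n w r u v = (\<Sum>i\<in>Vset n. deg n w i powr r * u i * v i)"

definition norm_V :: "nat \<Rightarrow> (nat \<Rightarrow> nat \<Rightarrow> real) \<Rightarrow> real \<Rightarrow> (nat \<Rightarrow> real) \<Rightarrow> real" where
  "norm_V n w r u = sqrt (inner_V n w r u u)"

definition laplace :: "nat \<Rightarrow> (nat \<Rightarrow> nat \<Rightarrow> real) \<Rightarrow> real \<Rightarrow> (nat \<Rightarrow> real) \<Rightarrow> nat \<Rightarrow> real" where
  "laplace n w r u i = (if i \<in> Vset n then
      deg n w i powr (-r) * (\<Sum>j\<in>Vset n. w i j * (u i - u j)) else 0)"

definition mass :: "nat \<Rightarrow> (nat \<Rightarrow> nat \<Rightarrow> real) \<Rightarrow> real \<Rightarrow> (nat \<Rightarrow> real) \<Rightarrow> real" where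
  "mass n w r u = (\<Sum>i\<in>Vset n. deg n w i powr r * u i)"

definition indic_V :: "nat \<Rightarrow> nat \<Rightarrow> real" where
  "indic_V n i = (if i \<in> Vset n then 1 else 0)"

definition avg :: "nat \<Rightarrow> (nat \<Rightarrow> nat \<Rightarrow> real) \<Rightarrow> real \<Rightarrow> (nat \<Rightarrow> real) \<Rightarrow> nat \<Rightarrow> real" where
  "avg n w r u i = mass n w r u / (\<Sum>j\<in>Vset n. deg n w j powr r) * indic_V n i"

definition phi_sol :: "nat \<Rightarrow> (nat \<Rightarrow> nat \<Rightarrow> real) \<Rightarrow> real \<Rightarrow> (nat \<Rightarrow> real) \<Rightarrow> nat \<Rightarrow> real" where
  "phi_sol n w r u = (THE \<phi>. (\<forall>i\<in>Vset n. laplace n w r \<phi> i = u i - avg n w r u i)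
       \<and> mass n w r \<phi> = 0 \<and> (\<forall>i. i \<notin> Vset n \<longrightarrow> \<phi> i = 0))"

definition Lop :: "nat \<Rightarrow> (nat \<Rightarrow> nat \<Rightarrow> real) \<Rightarrow> real \<Rightarrow> real \<Rightarrow> (nat \<Rightarrow> real) \<Rightarrow> nat \<Rightarrow> real" where
  "Lop n w r \<gamma> u i = laplace n w r u i + \<gamma> * phi_sol n w r u i"

definition expL :: "nat \<Rightarrow> (nat \<Rightarrow> nat \<Rightarrow> real) \<Rightarrow> real \<Rightarrow> real \<Rightarrow> real \<Rightarrow> (nat \<Rightarrow> real) \<Rightarrow> nat \<Rightarrow> real" where
  "expL n w r \<gamma> \<tau> u i = (\<Sum>m. ((- \<tau>) ^ m / fact m) * ((Lop n w r \<gamma> ^^ m) u) i)"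

definition J_tilde :: "nat \<Rightarrow> (nat \<Rightarrow> nat \<Rightarrow> real) \<Rightarrow> real \<Rightarrow> real \<Rightarrow> real \<Rightarrow> (nat \<Rightarrow> real) \<Rightarrow> real" where
  "J_tilde n w r \<gamma> \<tau> u = (1 / \<tau>) * inner_V n w r (\<lambda>i. indic_V n i - u i) (expL n w r \<gamma> \<tau> u)"

definition K_set :: "nat \<Rightarrow> (nat \<Rightarrow> real) set" where
  "K_set n = {u. \<forall>i\<in>Vset n. 0 \<le> u i \<and> u i \<le> 1}"

definition Vb_set :: "nat \<Rightarrow> (nat \<Rightarrow> real) set" where
  "Vb_set n = {u. \<forall>i\<in>Vset n. u i = 0 \<or> u i = 1}"

end

theory Submission
  imports Defs "Jordan_Normal_Form.Determinant"
begin

text \<open>The bound \<open>J\<^sub>\<tau>(u) \<le> C\<close> says \<open>\<langle>\<chi>\<^sub>V - u, exp(-\<tau>L) u\<rangle> \<le> \<tau> C\<close>. The potential \<open>\<phi>\<close>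
  depends linearly on \<open>u\<close> (by uniqueness), so \<open>L\<close> is a bounded linear operator on the
  finite-dimensional space of vertex functions, and \<open>exp(-\<tau>L) u\<close> differs from \<open>u\<close> pointwise by
  at most \<open>(exp(\<tau>M) - 1)\<close> times the \<open>\<ell>\<^sup>1\<close>-norm of \<open>u\<close>. Hence the double-well quantity
  \<open>\<langle>\<chi>\<^sub>V - u, u\<rangle>\<close>, which is nonnegative on \<open>\<K>\<close>, tends to zero along the sequence. By
  Bolzano-Weierstrass a subsequence converges to some \<open>v\<close> with values in \<open>[0,1]\<close> and
  \<open>\<langle>\<chi>\<^sub>V - v, v\<rangle> = 0\<close>, which forces \<open>v\<close> to be \<open>{0,1}\<close>-valued.\<close>

lemma square_system_solvable_if_injective:
  fixes a :: "nat \<Rightarrow> nat \<Rightarrow> real" and n :: nat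
  assumes inj: "\<And>\<phi>. \<forall>i\<in>{1..n}. (\<Sum>j\<in>{1..n}. a i j * \<phi> j) = 0 \<Longrightarrow> \<forall>j\<in>{1..n}. \<phi> j = 0"
  shows "\<exists>\<phi>. \<forall>i\<in>{1..n}. (\<Sum>j\<in>{1..n}. a i j * \<phi> j) = b i"
proof -
  define A :: "real mat" where "A = mat n n (\<lambda>(i,j). a (Suc i) (Suc j))"
  have A: "A \<in> carrier_mat n n" by (simp add: A_def)
  have shift: "(\<Sum>j\<in>{1..n}. a (Suc i) j * f j) = (\<Sum>j<n. a (Suc i) (Suc j) * f (Suc j))" for i f
    by (rule sum.reindex_bij_witness[of _ Suc "\<lambda>j. j - 1"]) auto
  have mult_vec: "vec_index (A *\<^sub>v v) i = (\<Sum>j<n. a (Suc i) (Suc j) * vec_index v j)"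
    if "i < n" "v \<in> carrier_vec n" for i v
    using that by (simp add: A_def scalar_prod_def row_def atLeast0LessThan)
  have solves: "\<forall>i\<in>{1..n}. (\<Sum>j\<in>{1..n}. a i j * vec_index v (j - 1)) = vec_index (A *\<^sub>v v) (i - 1)"
    if "v \<in> carrier_vec n" for v
  proof
    fix i assume "i \<in> {1..n}"
    then obtain i' where i': "i = Suc i'" "i' < n" by (cases i) auto
    then show "(\<Sum>j\<in>{1..n}. a i j * vec_index v (j - 1)) = vec_index (A *\<^sub>v v) (i - 1)"
      using mult_vec[OF i'(2) that] shift[of i' "\<lambda>j. vec_index v (j - 1)"] by simp
  qed
  have "det A \<noteq> 0"
  proof
    assume "det A = 0"
    then obtain v where v: "v \<in> carrier_vec n" "v \<noteq> 0\<^sub>v n" "A *\<^sub>v v = 0\<^sub>v n"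
      using det_0_iff_vec_prod_zero_field[OF A] by auto
    have "\<forall>i\<in>{1..n}. (\<Sum>j\<in>{1..n}. a i j * vec_index v (j - 1)) = 0"
      using solves[OF v(1)] v(3) by auto
    from inj[OF this] have "\<forall>j<n. vec_index v j = 0"
      by (metis Suc_leI atLeastAtMost_iff diff_Suc_1 le_add1 plus_1_eq_Suc)
    then have "v = 0\<^sub>v n" using v(1) by (intro eq_vecI) auto
    with v(2) show False by simp
  qed
  from det_non_zero_imp_unit[OF A this, unfolded Units_def, of "()"]
  obtain B where B: "B \<in> carrier_mat n n" and AB: "A * B = 1\<^sub>m n"
    by (auto simp: ring_mat_def)
  define x where "x = B *\<^sub>v vec n (\<lambda>i. b (Suc i))"
  have x: "x \<in> carrier_vec n" using B by (simp add: x_def)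
  have "A *\<^sub>v x = vec n (\<lambda>i. b (Suc i))"
    unfolding x_def using A B AB by (metis assoc_mult_mat_vec one_mult_mat_vec vec_carrier)
  then show ?thesis
    using solves[OF x] by (intro exI[of _ "\<lambda>j. vec_index x (j - 1)"]) auto
qed

lemma finite_coordinates_convergent_subseq:
  fixes f :: "nat \<Rightarrow> 'a \<Rightarrow> real"
  assumes "finite I" and "\<And>k i. i \<in> I \<Longrightarrow> \<bar>f k i\<bar> \<le> B"
  shows "\<exists>s g. strict_mono s \<and> (\<forall>i\<in>I. (\<lambda>l. f (s l) i) \<longlonglongrightarrow> g i)"
  using assms
proof (induction I rule: finite_induct)
  case empty
  show ?case by (rule exI[of _ id]) (auto simp: strict_mono_def)
next
  case (insert x I)
  then obtain s g where s: "strict_mono s" and g: "\<forall>i\<in>I. (\<lambda>l. f (s l) i) \<longlonglongrightarrow> g i"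
    by blast
  have "bounded (range (\<lambda>l. f (s l) x))"
    using insert.prems by (intro boundedI[of _ B]) auto
  then obtain lx t where t: "strict_mono t" and lx: "((\<lambda>l. f (s l) x) \<circ> t) \<longlonglongrightarrow> lx"
    using bounded_imp_convergent_subsequence by blast
  have "(\<lambda>l. f ((s \<circ> t) l) i) \<longlonglongrightarrow> (g(x := lx)) i" if "i \<in> insert x I" for i
  proof (cases "i = x")
    case True
    then show ?thesis using lx by (simp add: o_def)
  next
    case False
    then show ?thesis
      using that LIMSEQ_subseq_LIMSEQ[OF g[rule_format] t] by (simp add: o_def)
  qed
  then show ?case using strict_mono_o[OF s t] by blast
qed

lemma norm_V_tendsto_zero:
  assumes "\<forall>i\<in>Vset n. (\<lambda>l. f l i) \<longlonglongrightarrow> g i"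
  shows "(\<lambda>l. norm_V n w r (\<lambda>i. f l i - g i)) \<longlonglongrightarrow> 0"
proof -
  have "(\<lambda>l. norm_V n w r (\<lambda>i. f l i - g i)) \<longlonglongrightarrow>
      sqrt (\<Sum>i\<in>Vset n. deg n w i powr r * (g i - g i) * (g i - g i))"
    unfolding norm_V_def inner_V_def by (intro tendsto_intros) (use assms in auto)
  then show ?thesis by simp
qed

lemma K_set_closed:
  assumes "\<forall>i\<in>Vset n. (\<lambda>l. f l i) \<longlonglongrightarrow> g i" "\<forall>l. f l \<in> K_set n"
  shows "g \<in> K_set n"
  unfolding K_set_def
proof (intro CollectI ballI conjI)
  fix i assume i: "i \<in> Vset n"
  show "0 \<le> g i"
    by (rule LIMSEQ_le_const[OF assms(1)[rule_format, OF i]]) (use assms(2) i in \<open>auto simp: K_set_def\<close>)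
  show "g i \<le> 1"
    by (rule LIMSEQ_le_const2[OF assms(1)[rule_format, OF i]]) (use assms(2) i in \<open>auto simp: K_set_def\<close>)
qed

lemma finite_Vset: "finite (Vset n)"
  by (simp add: Vset_def)

definition potential_eqs ::
    "nat \<Rightarrow> (nat \<Rightarrow> nat \<Rightarrow> real) \<Rightarrow> real \<Rightarrow> (nat \<Rightarrow> real) \<Rightarrow> (nat \<Rightarrow> real) \<Rightarrow> bool" where
  "potential_eqs n w r u \<phi> \<longleftrightarrow> (\<forall>i\<in>Vset n. laplace n w r \<phi> i = u i - avg n w r u i)
     \<and> mass n w r \<phi> = 0 \<and> (\<forall>i. i \<notin> Vset n \<longrightarrow> \<phi> i = 0)"

definition laplace_coeff :: "nat \<Rightarrow> (nat \<Rightarrow> nat \<Rightarrow> real) \<Rightarrow> real \<Rightarrow> nat \<Rightarrow> nat \<Rightarrow> real" where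
  "laplace_coeff n w r i j = deg n w i powr (-r) * ((if i = j then deg n w i else 0) - w i j)"

definition norm1_V :: "nat \<Rightarrow> (nat \<Rightarrow> real) \<Rightarrow> real" where
  "norm1_V n v = (\<Sum>i\<in>Vset n. \<bar>v i\<bar>)"

definition Lop_bound :: "nat \<Rightarrow> (nat \<Rightarrow> nat \<Rightarrow> real) \<Rightarrow> real \<Rightarrow> real \<Rightarrow> real" where
  "Lop_bound n w r \<gamma> = (\<Sum>i\<in>Vset n. \<Sum>j\<in>Vset n. \<bar>Lop n w r \<gamma> (indicator {j}) i\<bar>)"

definition double_well :: "nat \<Rightarrow> (nat \<Rightarrow> nat \<Rightarrow> real) \<Rightarrow> real \<Rightarrow> (nat \<Rightarrow> real) \<Rightarrow> real" where
  "double_well n w r u = (\<Sum>i\<in>Vset n. deg n w i powr r * (u i * (1 - u i)))"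

lemma laplace_cong: "\<forall>k\<in>Vset n. \<phi> k = \<psi> k \<Longrightarrow> laplace n w r \<phi> i = laplace n w r \<psi> i"
  by (simp add: laplace_def)

lemma mass_cong: "\<forall>k\<in>Vset n. \<phi> k = \<psi> k \<Longrightarrow> mass n w r \<phi> = mass n w r \<psi>"
  by (simp add: mass_def)

lemma mass_const: "\<forall>k\<in>Vset n. \<phi> k = c \<Longrightarrow> mass n w r \<phi> = c * (\<Sum>j\<in>Vset n. deg n w j powr r)"
  by (simp add: mass_def sum_distrib_left mult.commute)

lemma mass_linear_comb:
  "mass n w r (\<lambda>k. \<Sum>j\<in>A. f j * \<psi> j k) = (\<Sum>j\<in>A. f j * mass n w r (\<psi> j))"
proof -
  have "mass n w r (\<lambda>k. \<Sum>j\<in>A. f j * \<psi> j k)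
      = (\<Sum>k\<in>Vset n. \<Sum>j\<in>A. f j * (deg n w k powr r * \<psi> j k))"
    by (simp add: mass_def sum_distrib_left mult.left_commute)
  also have "\<dots> = (\<Sum>j\<in>A. \<Sum>k\<in>Vset n. f j * (deg n w k powr r * \<psi> j k))"
    by (rule sum.swap)
  finally show ?thesis by (simp add: mass_def sum_distrib_left)
qed

lemma abs_le_norm1_V: "i \<in> Vset n \<Longrightarrow> \<bar>v i\<bar> \<le> norm1_V n v"
  unfolding norm1_V_def using finite_Vset by (intro member_le_sum) auto

lemma norm1_V_le_card: "\<forall>i\<in>Vset n. \<bar>v i\<bar> \<le> 1 \<Longrightarrow> norm1_V n v \<le> real n"
  unfolding norm1_V_def using sum_mono[of "Vset n" "\<lambda>i. \<bar>v i\<bar>" "\<lambda>_. 1"]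
  by (simp add: Vset_def)

lemma Lop_bound_nonneg: "Lop_bound n w r \<gamma> \<ge> 0"
  unfolding Lop_bound_def by (simp add: sum_nonneg)

lemma laplace_eq_coeff_sum:
  assumes i: "i \<in> Vset n"
  shows "laplace n w r \<phi> i = (\<Sum>j\<in>Vset n. laplace_coeff n w r i j * \<phi> j)"
proof -
  have "(\<Sum>j\<in>Vset n. (if i = j then deg n w i else 0) * \<phi> j)
      = (\<Sum>j\<in>Vset n. if i = j then deg n w i * \<phi> j else 0)"
    by (intro sum.cong) auto
  then have diag: "(\<Sum>j\<in>Vset n. (if i = j then deg n w i else 0) * \<phi> j) = deg n w i * \<phi> i"
    using i finite_Vset by simp
  have "(\<Sum>j\<in>Vset n. laplace_coeff n w r i j * \<phi> j) = deg n w i powr (-r) *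
     ((\<Sum>j\<in>Vset n. (if i = j then deg n w i else 0) * \<phi> j) - (\<Sum>j\<in>Vset n. w i j * \<phi> j))"
    by (simp add: laplace_coeff_def sum_distrib_left sum_subtractf[symmetric] algebra_simps)
  then show ?thesis
    using i by (simp add: diag laplace_def deg_def sum_distrib_right sum_subtractf right_diff_distrib)
qed

lemma laplace_linear_comb:
  "laplace n w r (\<lambda>k. \<Sum>j\<in>A. f j * \<psi> j k) i = (\<Sum>j\<in>A. f j * laplace n w r (\<psi> j) i)"
proof (cases "i \<in> Vset n")
  case True
  have "laplace n w r (\<lambda>k. \<Sum>j\<in>A. f j * \<psi> j k) i
      = (\<Sum>k\<in>Vset n. \<Sum>j\<in>A. f j * (laplace_coeff n w r i k * \<psi> j k))"
    by (simp add: laplace_eq_coeff_sum[OF True] sum_distrib_left mult.left_commute)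
  also have "\<dots> = (\<Sum>j\<in>A. \<Sum>k\<in>Vset n. f j * (laplace_coeff n w r i k * \<psi> j k))"
    by (rule sum.swap)
  finally show ?thesis
    by (simp add: laplace_eq_coeff_sum[OF True] sum_distrib_left)
qed (simp add: laplace_def)

context
  fixes n :: nat and w :: "nat \<Rightarrow> nat \<Rightarrow> real" and r :: real
  assumes G: "graph_G n w"
begin

lemma weight_nonneg: "w i j \<ge> 0"
  using G by (simp add: graph_G_def)

lemma weight_sym: "w i j = w j i"
  using G by (simp add: graph_G_def)

lemma deg_pos:
  assumes i: "i \<in> Vset n"
  shows "deg n w i > 0"
proof -
  define j where "j = (if i = 1 then 2 else 1::nat)"
  have j: "j \<in> Vset n" "j \<noteq> i"
    using G i by (auto simp: j_def Vset_def graph_G_def)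
  have "(i, j) \<in> (edge_rel n w)\<^sup>*"
    using G i j by (simp add: graph_G_def)
  then obtain k where "(i, k) \<in> edge_rel n w"
    using j(2) by (metis converse_rtranclE)
  then have k: "k \<in> Vset n" "w i k > 0" by (auto simp: edge_rel_def)
  have "w i k \<le> deg n w i"
    unfolding deg_def using k finite_Vset by (intro member_le_sum) (auto simp: weight_nonneg)
  with k show ?thesis by simp
qed

lemma deg_powr_pos: "i \<in> Vset n \<Longrightarrow> deg n w i powr r > 0"
  using deg_pos[of i] by simp

lemma deg_powr_mult_inverse: "i \<in> Vset n \<Longrightarrow> deg n w i powr r * deg n w i powr (-r) = 1"
  using deg_pos[of i] by (simp add: powr_minus field_simps)

lemma sum_deg_powr_pos: "(\<Sum>j\<in>Vset n. deg n w j powr r) > 0"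
proof -
  have "Vset n \<noteq> {}" using G by (auto simp: graph_G_def Vset_def)
  then show ?thesis using finite_Vset deg_powr_pos by (intro sum_pos) auto
qed

lemma deg_powr_mult_laplace:
  "i \<in> Vset n \<Longrightarrow> deg n w i powr r * laplace n w r \<phi> i = (\<Sum>j\<in>Vset n. w i j * (\<phi> i - \<phi> j))"
  by (simp add: laplace_def mult.assoc[symmetric] deg_powr_mult_inverse)

lemma mass_laplace: "mass n w r (laplace n w r \<phi>) = 0"
proof -
  let ?S = "\<Sum>i\<in>Vset n. \<Sum>j\<in>Vset n. w i j * (\<phi> i - \<phi> j)"
  have "?S = (\<Sum>i\<in>Vset n. \<Sum>j\<in>Vset n. w j i * (\<phi> j - \<phi> i))"
    by (rule sum.swap)
  also have "\<dots> = - ?S"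
    by (simp add: sum_negf[symmetric] weight_sym algebra_simps)
  finally have "?S = 0" by linarith
  then show ?thesis
    by (simp add: mass_def deg_powr_mult_laplace cong: sum.cong)
qed

lemma dirichlet_energy:
  "2 * inner_V n w r \<phi> (laplace n w r \<phi>) = (\<Sum>i\<in>Vset n. \<Sum>j\<in>Vset n. w i j * (\<phi> i - \<phi> j)\<^sup>2)"
proof -
  let ?S = "\<Sum>i\<in>Vset n. \<Sum>j\<in>Vset n. w i j * \<phi> i * (\<phi> i - \<phi> j)"
  have inner: "inner_V n w r \<phi> (laplace n w r \<phi>) = ?S"
    unfolding inner_V_def
    by (intro sum.cong refl)
      (simp add: mult.commute[of _ "\<phi> _"] mult.assoc deg_powr_mult_laplace sum_distrib_left)
  have "?S = (\<Sum>i\<in>Vset n. \<Sum>j\<in>Vset n. w i j * \<phi> j * (\<phi> j - \<phi> i))"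
    by (subst sum.swap) (simp add: weight_sym)
  then have "2 * ?S = ?S + (\<Sum>i\<in>Vset n. \<Sum>j\<in>Vset n. w i j * \<phi> j * (\<phi> j - \<phi> i))"
    by simp
  also have "\<dots> = (\<Sum>i\<in>Vset n. \<Sum>j\<in>Vset n. w i j * (\<phi> i - \<phi> j)\<^sup>2)"
    by (simp add: sum.distrib[symmetric] power2_eq_square algebra_simps)
  finally show ?thesis by (simp add: inner)
qed

lemma harmonic_imp_constant:
  assumes harmonic: "\<forall>i\<in>Vset n. laplace n w r \<phi> i = 0" and "i \<in> Vset n" "j \<in> Vset n"
  shows "\<phi> i = \<phi> j"
proof -
  have "(\<Sum>i\<in>Vset n. \<Sum>j\<in>Vset n. w i j * (\<phi> i - \<phi> j)\<^sup>2) = 0"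
    using dirichlet_energy[of \<phi>] harmonic by (simp add: inner_V_def)
  then have zero: "\<forall>i\<in>Vset n. \<forall>j\<in>Vset n. w i j * (\<phi> i - \<phi> j)\<^sup>2 = 0"
    using finite_Vset
    by (subst (asm) sum_nonneg_eq_0_iff) (auto intro!: sum_nonneg simp: weight_nonneg sum_nonneg_eq_0_iff)
  have edge: "\<phi> a = \<phi> b" if "(a, b) \<in> edge_rel n w" for a b
    using that zero by (auto simp: edge_rel_def) (metis less_irrefl)
  have "(i, j) \<in> (edge_rel n w)\<^sup>*"
    using G assms by (simp add: graph_G_def)
  then show ?thesis
    by (induction rule: rtrancl_induct) (auto dest: edge)
qed

lemma harmonic_mass_zero_imp_zero:
  assumes "\<forall>i\<in>Vset n. laplace n w r \<phi> i = 0" "mass n w r \<phi> = 0" "i \<in> Vset n"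
  shows "\<phi> i = 0"
proof -
  have "\<forall>k\<in>Vset n. \<phi> k = \<phi> i"
    using harmonic_imp_constant[OF assms(1) _ assms(3)] by blast
  from mass_const[OF this] assms(2) sum_deg_powr_pos show ?thesis by simp
qed

lemma mass_sub_avg: "mass n w r (\<lambda>i. u i - avg n w r u i) = 0"
proof -
  define S where "S = (\<Sum>j\<in>Vset n. deg n w j powr r)"
  define m where "m = mass n w r u"
  have "mass n w r (\<lambda>i. u i - avg n w r u i)
      = (\<Sum>i\<in>Vset n. deg n w i powr r * u i - m / S * deg n w i powr r)"
    unfolding mass_def by (intro sum.cong) (auto simp: avg_def indic_V_def m_def S_def algebra_simps)
  also have "\<dots> = m - m / S * S"
    by (simp add: sum_subtractf sum_distrib_left S_def m_def mass_def)
  finally show ?thesis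
    using sum_deg_powr_pos by (simp add: S_def)
qed

lemma potential_unique:
  assumes "potential_eqs n w r u \<phi>\<^sub>1" "potential_eqs n w r u \<phi>\<^sub>2"
  shows "\<phi>\<^sub>1 = \<phi>\<^sub>2"
proof
  fix i
  let ?d = "\<lambda>k. \<phi>\<^sub>1 k - \<phi>\<^sub>2 k"
  show "\<phi>\<^sub>1 i = \<phi>\<^sub>2 i"
  proof (cases "i \<in> Vset n")
    case True
    have "laplace n w r ?d k = laplace n w r \<phi>\<^sub>1 k - laplace n w r \<phi>\<^sub>2 k" if "k \<in> Vset n" for k
      by (simp add: laplace_eq_coeff_sum[OF that] right_diff_distrib sum_subtractf)
    then have "\<forall>k\<in>Vset n. laplace n w r ?d k = 0"
      using assms by (simp add: potential_eqs_def)
    moreover have "mass n w r ?d = 0"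
      using assms by (simp add: potential_eqs_def mass_def sum_subtractf right_diff_distrib)
    ultimately show ?thesis
      using harmonic_mass_zero_imp_zero True by fastforce
  qed (use assms in \<open>simp add: potential_eqs_def\<close>)
qed

text \<open>Adding the mass to the Laplacian yields an injective square system; its solution has
  zero mass because both the Laplacian and \<open>u - \<A>(u)\<close> have zero mass.\<close>

lemma potential_exists: "\<exists>\<phi>. potential_eqs n w r u \<phi>"
proof -
  define a where "a i j = laplace_coeff n w r i j + deg n w j powr r" for i j
  have a: "(\<Sum>j\<in>Vset n. a i j * \<phi> j) = laplace n w r \<phi> i + mass n w r \<phi>"
    if "i \<in> Vset n" for i \<phi>
    using laplace_eq_coeff_sum[OF that] by (simp add: a_def mass_def sum.distrib algebra_simps)
  have zero_mass: "mass n w r \<phi> = 0"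
    if "\<forall>i\<in>Vset n. laplace n w r \<phi> i + mass n w r \<phi> = f i" "mass n w r f = 0" for \<phi> f
  proof -
    have "mass n w r (\<lambda>i. laplace n w r \<phi> i + mass n w r \<phi>) = mass n w r f"
      using that(1) by (intro mass_cong) auto
    then have "mass n w r (\<lambda>i. laplace n w r \<phi> i + mass n w r \<phi>) = 0"
      using that(2) by simp
    then have "(\<Sum>i\<in>Vset n. deg n w i powr r) * mass n w r \<phi> = 0"
      using mass_laplace[of \<phi>]
      by (simp add: mass_def distrib_left sum.distrib sum_distrib_right[symmetric])
    then show ?thesis using sum_deg_powr_pos by simp
  qed
  have "\<exists>\<phi>. \<forall>i\<in>{1..n}. (\<Sum>j\<in>{1..n}. a i j * \<phi> j) = u i - avg n w r u i"
  proof (rule square_system_solvable_if_injective)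
    fix \<phi> assume "\<forall>i\<in>{1..n}. (\<Sum>j\<in>{1..n}. a i j * \<phi> j) = 0"
    then have \<phi>: "\<forall>i\<in>Vset n. laplace n w r \<phi> i + mass n w r \<phi> = 0"
      using a by (simp add: Vset_def)
    have "mass n w r \<phi> = 0"
      using zero_mass[OF \<phi>] by (simp add: mass_def)
    with \<phi> show "\<forall>j\<in>{1..n}. \<phi> j = 0"
      using harmonic_mass_zero_imp_zero by (simp add: Vset_def)
  qed
  then obtain \<phi> where \<phi>: "\<forall>i\<in>Vset n. laplace n w r \<phi> i + mass n w r \<phi> = u i - avg n w r u i"
    using a by (auto simp: Vset_def)
  have m: "mass n w r \<phi> = 0"
    using zero_mass[OF \<phi> mass_sub_avg] .
  define \<phi>' where "\<phi>' i = (if i \<in> Vset n then \<phi> i else 0)" for i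
  have agree: "\<forall>k\<in>Vset n. \<phi>' k = \<phi> k" by (simp add: \<phi>'_def)
  have "potential_eqs n w r u \<phi>'"
    unfolding potential_eqs_def
  proof (intro conjI ballI allI impI)
    fix i assume "i \<in> Vset n"
    then show "laplace n w r \<phi>' i = u i - avg n w r u i"
      using \<phi> m laplace_cong[OF agree] by simp
  next
    show "mass n w r \<phi>' = 0" using m mass_cong[OF agree] by simp
  qed (simp add: \<phi>'_def)
  then show ?thesis by blast
qed

lemma potential_eqs_phi_sol: "potential_eqs n w r u (phi_sol n w r u)"
proof -
  have "\<exists>!\<phi>. potential_eqs n w r u \<phi>"
    using potential_exists potential_unique by blast
  then show ?thesis
    unfolding phi_sol_def potential_eqs_def[abs_def] by (rule theI')
qed

lemma sum_mult_indicator_singleton: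
  "i \<in> Vset n \<Longrightarrow> (\<Sum>j\<in>Vset n. u j * indicator {j} i) = (u i :: real)"
  using finite_Vset by (simp add: indicator_def if_distrib cong: if_cong)

lemma phi_sol_linear:
  "phi_sol n w r u = (\<lambda>i. \<Sum>j\<in>Vset n. u j * phi_sol n w r (indicator {j}) i)"
proof (rule potential_unique[OF potential_eqs_phi_sol])
  let ?p = "\<lambda>j. phi_sol n w r (indicator {j})"
  have P: "potential_eqs n w r (indicator {j}) (?p j)" for j
    by (rule potential_eqs_phi_sol)
  have mass_indicator: "mass n w r (indicator {j}) = deg n w j powr r" if "j \<in> Vset n" for j
    using that finite_Vset by (simp add: mass_def indicator_def if_distrib cong: if_cong)
  have avg: "(\<Sum>j\<in>Vset n. u j * avg n w r (indicator {j}) i) = avg n w r u i"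
    if "i \<in> Vset n" for i
  proof -
    have "(\<Sum>j\<in>Vset n. u j * avg n w r (indicator {j}) i)
        = (\<Sum>j\<in>Vset n. deg n w j powr r * u j / (\<Sum>j\<in>Vset n. deg n w j powr r))"
      using that by (intro sum.cong) (auto simp: avg_def mass_indicator indic_V_def)
    then show ?thesis
      using that by (simp add: avg_def indic_V_def mass_def sum_divide_distrib)
  qed
  show "potential_eqs n w r u (\<lambda>i. \<Sum>j\<in>Vset n. u j * ?p j i)"
    unfolding potential_eqs_def
  proof (intro conjI ballI allI impI)
    fix i assume i: "i \<in> Vset n"
    have "laplace n w r (\<lambda>k. \<Sum>j\<in>Vset n. u j * ?p j k) i
        = (\<Sum>j\<in>Vset n. u j * (indicator {j} i - avg n w r (indicator {j}) i))"
      using P i by (simp add: laplace_linear_comb potential_eqs_def)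
    then show "laplace n w r (\<lambda>k. \<Sum>j\<in>Vset n. u j * ?p j k) i = u i - avg n w r u i"
      using sum_mult_indicator_singleton[OF i] avg[OF i]
      by (simp add: right_diff_distrib sum_subtractf)
  next
    show "mass n w r (\<lambda>k. \<Sum>j\<in>Vset n. u j * ?p j k) = 0"
      using P by (simp add: mass_linear_comb potential_eqs_def)
  next
    fix i assume "i \<notin> Vset n"
    then show "(\<Sum>j\<in>Vset n. u j * ?p j i) = 0"
      using P by (simp add: potential_eqs_def)
  qed
qed

lemma Lop_linear:
  assumes i: "i \<in> Vset n"
  shows "Lop n w r \<gamma> u i = (\<Sum>j\<in>Vset n. u j * Lop n w r \<gamma> (indicator {j}) i)"
proof -
  have "laplace n w r u i = laplace n w r (\<lambda>k. \<Sum>j\<in>Vset n. u j * indicator {j} k) i"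
    by (rule laplace_cong) (simp add: sum_mult_indicator_singleton)
  then have "laplace n w r u i = (\<Sum>j\<in>Vset n. u j * laplace n w r (indicator {j}) i)"
    by (simp add: laplace_linear_comb)
  moreover have "phi_sol n w r u i = (\<Sum>j\<in>Vset n. u j * phi_sol n w r (indicator {j}) i)"
    by (subst phi_sol_linear) simp
  ultimately show ?thesis
    by (simp add: Lop_def sum.distrib algebra_simps sum_distrib_left)
qed

lemma norm1_V_Lop_le: "norm1_V n (Lop n w r \<gamma> u) \<le> Lop_bound n w r \<gamma> * norm1_V n u"
proof -
  have "\<bar>Lop n w r \<gamma> u i\<bar> \<le> norm1_V n u * (\<Sum>j\<in>Vset n. \<bar>Lop n w r \<gamma> (indicator {j}) i\<bar>)"
    if i: "i \<in> Vset n" for i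
  proof -
    have "\<bar>Lop n w r \<gamma> u i\<bar> \<le> (\<Sum>j\<in>Vset n. \<bar>u j\<bar> * \<bar>Lop n w r \<gamma> (indicator {j}) i\<bar>)"
      by (subst Lop_linear[OF i]) (rule order_trans[OF sum_abs], simp add: abs_mult)
    also have "\<dots> \<le> (\<Sum>j\<in>Vset n. norm1_V n u * \<bar>Lop n w r \<gamma> (indicator {j}) i\<bar>)"
      by (intro sum_mono mult_right_mono abs_le_norm1_V) auto
    finally show ?thesis by (simp add: sum_distrib_left)
  qed
  then have "norm1_V n (Lop n w r \<gamma> u)
      \<le> (\<Sum>i\<in>Vset n. norm1_V n u * (\<Sum>j\<in>Vset n. \<bar>Lop n w r \<gamma> (indicator {j}) i\<bar>))"
    unfolding norm1_V_def by (intro sum_mono) auto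
  then show ?thesis by (simp add: Lop_bound_def sum_distrib_left mult.commute)
qed

lemma norm1_V_Lop_power_le:
  "norm1_V n ((Lop n w r \<gamma> ^^ m) u) \<le> Lop_bound n w r \<gamma> ^ m * norm1_V n u"
proof (induction m)
  case (Suc m)
  have "norm1_V n ((Lop n w r \<gamma> ^^ Suc m) u) \<le> Lop_bound n w r \<gamma> * norm1_V n ((Lop n w r \<gamma> ^^ m) u)"
    by (simp add: norm1_V_Lop_le)
  also have "\<dots> \<le> Lop_bound n w r \<gamma> * (Lop_bound n w r \<gamma> ^ m * norm1_V n u)"
    by (intro mult_left_mono Suc.IH Lop_bound_nonneg)
  finally show ?case by (simp add: algebra_simps)
qed simp

text \<open>The exponential series is dominated termwise by that of \<open>e\<^sup>\<tau>\<^sup>M\<close>, and its zeroth term is \<open>u\<close>.\<close>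

lemma expL_minus_le:
  assumes i: "i \<in> Vset n" and tau: "\<tau> \<ge> 0"
  shows "\<bar>expL n w r \<gamma> \<tau> u i - u i\<bar> \<le> (exp (\<tau> * Lop_bound n w r \<gamma>) - 1) * norm1_V n u"
proof -
  define M where "M = Lop_bound n w r \<gamma>"
  define t where "t m = ((- \<tau>) ^ m / fact m) * ((Lop n w r \<gamma> ^^ m) u) i" for m
  define g where "g m = (\<tau> * M) ^ m / fact m * norm1_V n u" for m
  have t_le_g: "\<bar>t m\<bar> \<le> g m" for m
  proof -
    have "\<bar>((Lop n w r \<gamma> ^^ m) u) i\<bar> \<le> M ^ m * norm1_V n u"
      unfolding M_def using abs_le_norm1_V[OF i] norm1_V_Lop_power_le by (rule order_trans)
    then have "\<tau> ^ m / fact m * \<bar>((Lop n w r \<gamma> ^^ m) u) i\<bar> \<le> \<tau> ^ m / fact m * (M ^ m * norm1_V n u)"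
      using tau by (intro mult_left_mono) auto
    then show ?thesis
      using tau by (simp add: t_def g_def abs_mult power_abs power_mult_distrib)
  qed
  have g_sums: "g sums (exp (\<tau> * M) * norm1_V n u)"
    unfolding g_def using exp_converges[of "\<tau> * M"]
    by (intro sums_mult2) (simp add: divide_inverse mult.commute)
  have g_tail: "summable (\<lambda>m. g (Suc m))"
    using sums_summable[OF g_sums] by (simp add: summable_Suc_iff)
  have abs_tail: "summable (\<lambda>m. \<bar>t (Suc m)\<bar>)"
    by (rule summable_comparison_test'[of "\<lambda>m. g (Suc m)"]) (use g_tail t_le_g in auto)
  have "\<bar>\<Sum>m. t (Suc m)\<bar> \<le> (\<Sum>m. \<bar>t (Suc m)\<bar>)"
    by (rule summable_rabs[OF abs_tail])
  also have "\<dots> \<le> (\<Sum>m. g (Suc m))"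
    by (rule suminf_le) (use t_le_g abs_tail g_tail in auto)
  finally have "\<bar>\<Sum>m. t (Suc m)\<bar> \<le> (\<Sum>m. g (Suc m))" .
  moreover have "expL n w r \<gamma> \<tau> u i - u i = (\<Sum>m. t (Suc m))"
  proof -
    have "summable t"
      using summable_rabs_cancel[OF abs_tail] by (simp add: summable_Suc_iff)
    moreover have "expL n w r \<gamma> \<tau> u i = suminf t" and "t 0 = u i"
      by (simp_all add: expL_def t_def[abs_def])
    ultimately show ?thesis using suminf_split_head[of t] by simp
  qed
  moreover have "(\<Sum>m. g (Suc m)) = exp (\<tau> * M) * norm1_V n u - norm1_V n u"
    using suminf_split_head[OF sums_summable[OF g_sums]] sums_unique[OF g_sums] by (simp add: g_def)
  ultimately show ?thesis by (simp add: M_def algebra_simps)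
qed

lemma double_well_nonneg: "u \<in> K_set n \<Longrightarrow> double_well n w r u \<ge> 0"
  unfolding double_well_def K_set_def using deg_powr_pos
  by (intro sum_nonneg mult_nonneg_nonneg) auto

lemma double_well_le_J_tilde:
  assumes u: "u \<in> K_set n" and tau: "\<tau> > 0"
  shows "double_well n w r u \<le> \<tau> * J_tilde n w r \<gamma> \<tau> u
    + (\<Sum>i\<in>Vset n. deg n w i powr r) * ((exp (\<tau> * Lop_bound n w r \<gamma>) - 1) * real n)"
proof -
  let ?e = "expL n w r \<gamma> \<tau> u" and ?\<epsilon> = "(exp (\<tau> * Lop_bound n w r \<gamma>) - 1) * real n"
  have u01: "0 \<le> u i \<and> u i \<le> 1" if "i \<in> Vset n" for i
    using u that by (simp add: K_set_def)
  have "- ?\<epsilon> \<le> (1 - u i) * (?e i - u i)" if i: "i \<in> Vset n" for i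
  proof -
    have "\<bar>?e i - u i\<bar> \<le> (exp (\<tau> * Lop_bound n w r \<gamma>) - 1) * norm1_V n u"
      using expL_minus_le[OF i less_imp_le[OF tau]] .
    also have "\<dots> \<le> ?\<epsilon>"
      using tau Lop_bound_nonneg[of n w r \<gamma>] norm1_V_le_card[of n u] u01
      by (intro mult_left_mono) auto
    finally have "\<bar>?e i - u i\<bar> \<le> ?\<epsilon>" .
    moreover have "\<bar>(1 - u i) * (?e i - u i)\<bar> \<le> \<bar>?e i - u i\<bar>"
      unfolding abs_mult using u01[OF i] by (intro mult_left_le_one_le) auto
    ultimately show ?thesis by linarith
  qed
  then have "(\<Sum>i\<in>Vset n. deg n w i powr r * - ?\<epsilon>)
      \<le> (\<Sum>i\<in>Vset n. deg n w i powr r * ((1 - u i) * (?e i - u i)))"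
    using deg_powr_pos by (intro sum_mono mult_left_mono) (auto intro: less_imp_le)
  also have "\<dots> = inner_V n w r (\<lambda>i. indic_V n i - u i) ?e - double_well n w r u"
    unfolding inner_V_def double_well_def
    by (simp add: sum_subtractf[symmetric] indic_V_def algebra_simps)
  also have "inner_V n w r (\<lambda>i. indic_V n i - u i) ?e = \<tau> * J_tilde n w r \<gamma> \<tau> u"
    using tau by (simp add: J_tilde_def)
  finally show ?thesis
    by (simp add: sum_negf sum_distrib_right)
qed

lemma double_well_tendsto_zero:
  assumes "\<forall>k. \<tau> k > 0" "\<tau> \<longlonglongrightarrow> 0" "\<forall>k. u k \<in> K_set n"
    and "\<forall>k. J_tilde n w r \<gamma> (\<tau> k) (u k) \<le> C"
  shows "(\<lambda>k. double_well n w r (u k)) \<longlonglongrightarrow> 0"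
proof (rule tendsto_sandwich[where f = "\<lambda>_. 0"])
  define D where "D = (\<Sum>i\<in>Vset n. deg n w i powr r)"
  let ?R = "\<lambda>k. \<tau> k * C + D * ((exp (\<tau> k * Lop_bound n w r \<gamma>) - 1) * real n)"
  have "double_well n w r (u k) \<le> ?R k" for k
  proof -
    have "\<tau> k * J_tilde n w r \<gamma> (\<tau> k) (u k) \<le> \<tau> k * C"
      using assms(1,4) by (intro mult_left_mono) (auto intro: less_imp_le)
    then show ?thesis
      using double_well_le_J_tilde[OF spec[OF assms(3), of k] spec[OF assms(1), of k], of \<gamma>]
      by (simp add: D_def)
  qed
  then show "\<forall>\<^sub>F k in sequentially. double_well n w r (u k) \<le> ?R k" by simp
  have "?R \<longlonglongrightarrow> 0 * C + D * ((exp (0 * Lop_bound n w r \<gamma>) - 1) * real n)"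
    by (intro tendsto_intros assms(2))
  then show "?R \<longlonglongrightarrow> 0" by simp
qed (use assms(3) double_well_nonneg in auto)

lemma double_well_zero_imp_binary:
  assumes "v \<in> K_set n" "double_well n w r v = 0"
  shows "v \<in> Vb_set n"
  unfolding Vb_set_def
proof (intro CollectI ballI)
  fix i assume i: "i \<in> Vset n"
  have "\<forall>k\<in>Vset n. 0 \<le> deg n w k powr r * (v k * (1 - v k))"
    using assms(1) by (auto simp: K_set_def)
  then have "\<forall>k\<in>Vset n. deg n w k powr r * (v k * (1 - v k)) = 0"
    using assms(2) by (simp add: double_well_def sum_nonneg_eq_0_iff[OF finite_Vset])
  then have "deg n w i powr r * (v i * (1 - v i)) = 0"
    using i by blast
  then have "v i * (1 - v i) = 0"
    using deg_powr_pos[OF i] by simp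
  then show "v i = 0 \<or> v i = 1" by simp
qed

end

theorem theorem5p23:
  fixes n :: nat and w :: "nat \<Rightarrow> nat \<Rightarrow> real" and r \<gamma> C :: real
    and \<tau> :: "nat \<Rightarrow> real" and u :: "nat \<Rightarrow> nat \<Rightarrow> real"
  assumes "graph_G n w"
    and "0 \<le> r" "r \<le> 1"
    and "\<gamma> \<ge> 0"
    and "\<forall>k. \<tau> k > 0"
    and "\<tau> \<longlonglongrightarrow> 0"
    and "\<forall>k. u k \<in> K_set n"
    and "C > 0"
    and "\<forall>k. J_tilde n w r \<gamma> (\<tau> k) (u k) \<le> C"
  shows "\<exists>s v. strict_mono s \<and> v \<in> Vb_set n
           \<and> ((\<lambda>l. norm_V n w r (\<lambda>i. u (s l) i - v i)) \<longlonglongrightarrow> 0)"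
proof -
  have u01: "0 \<le> u k i \<and> u k i \<le> 1" if "i \<in> Vset n" for k i
    using assms(7) that by (simp add: K_set_def)
  obtain s v where s: "strict_mono s" and v: "\<forall>i\<in>Vset n. (\<lambda>l. u (s l) i) \<longlonglongrightarrow> v i"
    using finite_coordinates_convergent_subseq[OF finite_Vset[of n], of u 1] u01
    by fastforce
  have "v \<in> K_set n"
    using K_set_closed[OF v] s assms(7) by blast
  have "(\<lambda>l. double_well n w r (u (s l))) \<longlonglongrightarrow> double_well n w r v"
    unfolding double_well_def by (intro tendsto_intros) (use v in auto)
  moreover have "(\<lambda>l. double_well n w r (u (s l))) \<longlonglongrightarrow> 0"
    using LIMSEQ_subseq_LIMSEQ[OF double_well_tendsto_zero[OF assms(1,5,6,7,9)] s]
    by (simp add: o_def)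
  ultimately have "double_well n w r v = 0"
    by (rule LIMSEQ_unique)
  then have "v \<in> Vb_set n"
    using double_well_zero_imp_binary[OF assms(1) \<open>v \<in> K_set n\<close>] by blast
  then show ?thesis
    using s norm_V_tendsto_zero[OF v] by blast
qed

end
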